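(* In the second phase of the algorithm EM-GenPA (described in the context), processing the host requests sorted in ascending order by requested degree first and by new node (equivalently, time) second yields the same output distribution as processing them in ascending order of time; i.e., it correctly retains the output distribution of general preferential attachment.
   Context: General preferential attachment: start from a seed graph $G_0=(V_0,E_0)$ with $n_0$ nodes; iteratively add $N$ new nodes $v_{n_0+1},\dots,v_{n_0+N}$, each connected to $\ell\le n_0$ different earlier nodes (hosts), where a node $h$ of degree $d$ is chosen as host with probability proportional to $f(d)$ for a function $f:\mathbb N\to\mathbb R$. EM-GenPA works in two phases. Phase 1 samples, for each new node $v_{n_0+i}$ and each $j\in\{1,\dots,\ell\}$, only the degree $d_j$ of its $j$-th host (using counters of how many nodes currently have each degree), producing a host request $(v_{n_0+i},j,d_j)$ with time $t=\ell i+j$. Phase 2 resolves the requests: let $M(d,t)$ be the set of nodes having degree $d$ after time $t$, with $M(d,0)$ the seed nodes of degree $d$, and new node $v_{n_0+i}$ entering the set of degree-$\ell$ nodes at time $\ell(i+1)$. Processing a request for degree $d$ at time $t$ picks a node $u$ uniformly at random from $M(d,t-1)$, connects it to the requesting new node, and sets $M(d,t)=M(d,t-1)\setminus\{u\}$ and $M(d+1,t)=M(d+1,t-1)\cup\{u\}$. *)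

theory Defs
  imports "HOL-Probability.Probability_Mass_Function"
begin

text \<open>Nodes are natural numbers: seed nodes are 1..n0, new node v_(n0+i) is n0+i (1 <= i <= N).
  The seed graph is a set E0 of 2-element edges on {1..n0}.\<close>

definition seed_graph :: "nat \<Rightarrow> nat set set \<Rightarrow> bool" where
  "seed_graph n0 E0 \<longleftrightarrow> (\<forall>e\<in>E0. e \<subseteq> {1..n0} \<and> card e = 2)"

definition seed_deg :: "nat set set \<Rightarrow> nat \<Rightarrow> nat" where
  "seed_deg E0 u = card {e\<in>E0. u \<in> e}"

definition req_times :: "nat \<Rightarrow> nat \<Rightarrow> nat set" where
  "req_times l N = {l*i + j | i j. 1 \<le> i \<and> i \<le> N \<and> 1 \<le> j \<and> j \<le> l}"

text \<open>M(d,t): nodes of degree d after time t, given a (partial) resolution h of the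
  requests (h t = Some u: request at time t has been resolved to host u; None: not
  (yet) resolved). req t is the requested degree of the request at time t.\<close>
fun Mset :: "nat \<Rightarrow> nat set set \<Rightarrow> nat \<Rightarrow> nat \<Rightarrow> (nat \<Rightarrow> nat) \<Rightarrow> (nat \<Rightarrow> nat option)
             \<Rightarrow> nat \<Rightarrow> nat \<Rightarrow> nat set" where
  "Mset n0 E0 l N req h d 0 = {u \<in> {1..n0}. seed_deg E0 u = d}"
| "Mset n0 E0 l N req h d (Suc t) =
     (let base = Mset n0 E0 l N req h d t;
          after = (case h (Suc t) of
                     None \<Rightarrow> base
                   | Some u \<Rightarrow> (if req (Suc t) = d then base - {u}
                               else if Suc (req (Suc t)) = d then insert u base
                               else base))
      in if d = l then after \<union> {n0 + i | i. 1 \<le> i \<and> i \<le> N \<and> l * (i + 1) = Suc t}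
         else after)"

fun process :: "nat \<Rightarrow> nat set set \<Rightarrow> nat \<Rightarrow> nat \<Rightarrow> (nat \<Rightarrow> nat) \<Rightarrow> nat list
                \<Rightarrow> (nat \<Rightarrow> nat option) \<Rightarrow> (nat \<Rightarrow> nat option) option pmf" where
  "process n0 E0 l N req [] h = return_pmf (Some h)"
| "process n0 E0 l N req (t # ts) h =
     (let S = Mset n0 E0 l N req h (req t) (t - 1)
      in if S = {} then return_pmf None
         else bind_pmf (pmf_of_set S) (\<lambda>u. process n0 E0 l N req ts (h(t := Some u))))"

definition time_order :: "nat \<Rightarrow> nat \<Rightarrow> nat list" where
  "time_order l N = sorted_list_of_set (req_times l N)"

text \<open>Ascending by requested degree, ties by time: sort_key is a stable sort
  (insertion sort), applied to the list of times in ascending order.\<close>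
definition degree_time_order :: "nat \<Rightarrow> nat \<Rightarrow> (nat \<Rightarrow> nat) \<Rightarrow> nat list" where
  "degree_time_order l N req = sort_key req (time_order l N)"

end

theory Submission
  imports Defs
begin

text \<open>The request at time \<open>t\<close> samples uniformly from \<open>M(req t, t - 1)\<close>, and this set is
  changed only by the resolutions of requests at earlier times \<open>s\<close> with \<open>req s = req t\<close> or
  \<open>req s + 1 = req t\<close>. Two adjacent requests neither of which depends on the other in this
  sense commute, because the two uniform choices are made from sets that the other choice does
  not affect. Both the time order and the order by degree and then time respect every
  dependency (in the latter, a request that another one depends on has smaller degree, or equal
  degree and smaller time), so either order is turned into the other by such commuting swaps.\<close>

definition depends_on :: "(nat \<Rightarrow> nat) \<Rightarrow> nat \<Rightarrow> nat \<Rightarrow> bool" where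
  "depends_on req t s \<longleftrightarrow> s < t \<and> (req s = req t \<or> Suc (req s) = req t)"

lemma Mset_cong:
  assumes "\<And>s. s \<le> T \<Longrightarrow> req s = d \<or> Suc (req s) = d \<Longrightarrow> h s = h' s"
  shows "Mset n0 E0 l N req h d T = Mset n0 E0 l N req h' d T"
  using assms
proof (induction T)
  case 0
  show ?case by simp
next
  case (Suc T)
  have IH: "Mset n0 E0 l N req h d T = Mset n0 E0 l N req h' d T"
    using Suc by simp
  show ?case
  proof (cases "req (Suc T) = d \<or> Suc (req (Suc T)) = d")
    case True
    then have "h (Suc T) = h' (Suc T)" using Suc.prems by simp
    then show ?thesis by (simp only: Mset.simps IH)
  next
    case False
    then show ?thesis by (simp add: IH Let_def split: option.split)
  qed
qed

lemma process_swap: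
  assumes "\<not> depends_on req t s" and "\<not> depends_on req s t"
  shows "process n0 E0 l N req (t # s # ts) h = process n0 E0 l N req (s # t # ts) h"
proof (cases "s = t")
  case False
  define St where "St = Mset n0 E0 l N req h (req t) (t - 1)"
  define Ss where "Ss = Mset n0 E0 l N req h (req s) (s - 1)"
  have Ss_after_t: "Mset n0 E0 l N req (h(t := Some u)) (req s) (s - 1) = Ss" for u
    unfolding Ss_def using assms(2) False by (intro Mset_cong) (auto simp: depends_on_def)
  have St_after_s: "Mset n0 E0 l N req (h(s := Some v)) (req t) (t - 1) = St" for v
    unfolding St_def using assms(1) False by (intro Mset_cong) (auto simp: depends_on_def)
  have "process n0 E0 l N req (t # s # ts) h =
     (if St = {} then return_pmf None else pmf_of_set St \<bind> (\<lambda>u.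
        if Ss = {} then return_pmf None else pmf_of_set Ss \<bind> (\<lambda>v.
          process n0 E0 l N req ts (h(t := Some u, s := Some v)))))"
    using Ss_after_t by (simp add: St_def Let_def)
  also have "\<dots> =
     (if Ss = {} then return_pmf None else pmf_of_set Ss \<bind> (\<lambda>v.
        if St = {} then return_pmf None else pmf_of_set St \<bind> (\<lambda>u.
          process n0 E0 l N req ts (h(s := Some v, t := Some u)))))"
    using False by (cases "St = {}"; cases "Ss = {}")
      (simp_all add: fun_upd_twist bind_commute_pmf[of "pmf_of_set St"])
  also have "\<dots> = process n0 E0 l N req (s # t # ts) h"
    using St_after_s by (simp add: Ss_def Let_def)
  finally show ?thesis .
qed simp

lemma process_move_to_front:
  assumes "\<forall>a\<in>set as. \<not> depends_on req a y \<and> \<not> depends_on req y a"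
  shows "process n0 E0 l N req (as @ y # bs) h = process n0 E0 l N req (y # as @ bs) h"
  using assms
proof (induction as arbitrary: h)
  case Nil
  show ?case by simp
next
  case (Cons a as)
  have "process n0 E0 l N req (a # as @ y # bs) h = process n0 E0 l N req (a # y # as @ bs) h"
    using Cons by (simp add: Let_def)
  also have "\<dots> = process n0 E0 l N req (y # a # as @ bs) h"
    using Cons.prems by (intro process_swap) auto
  finally show ?case by simp
qed

lemma process_eq_if_respects_dependencies:
  assumes "mset xs = mset ys"
    and "sorted_wrt (\<lambda>t s. \<not> depends_on req t s) xs"
    and "sorted_wrt (\<lambda>t s. \<not> depends_on req t s) ys"
  shows "process n0 E0 l N req xs h = process n0 E0 l N req ys h"
  using assms
proof (induction ys arbitrary: xs h)
  case Nil
  then show ?case by simp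
next
  case (Cons y ys)
  have "y \<in> set xs" using Cons.prems(1) by (metis list.set_intros(1) set_mset_mset)
  then obtain as bs where xs: "xs = as @ y # bs" by (meson split_list)
  have mset_rest: "mset (as @ bs) = mset ys" using Cons.prems(1) xs by simp
  have "\<not> depends_on req a y \<and> \<not> depends_on req y a" if "a \<in> set as" for a
  proof
    have "a \<in> set ys" using that mset_rest by (metis Un_iff set_append set_mset_mset)
    then show "\<not> depends_on req y a" using Cons.prems(3) by simp
    show "\<not> depends_on req a y" using Cons.prems(2) that xs by (simp add: sorted_wrt_append)
  qed
  then have "process n0 E0 l N req xs h = process n0 E0 l N req (y # as @ bs) h"
    unfolding xs by (intro process_move_to_front) blast
  also have "\<dots> = process n0 E0 l N req (y # ys) h"
    using Cons.IH[OF mset_rest] Cons.prems(2,3) xs by (simp add: sorted_wrt_append Let_def)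
  finally show ?case .
qed

lemma sorted_wrt_sort_key_lex:
  fixes f :: "'a::linorder \<Rightarrow> 'b::linorder"
  assumes "sorted xs"
  shows "sorted_wrt (\<lambda>x y. f x < f y \<or> f x = f y \<and> x \<le> y) (sort_key f xs)"
  using assms
proof (induction xs)
  case Nil
  show ?case by simp
next
  case (Cons x xs)
  have "sorted_wrt (\<lambda>x y. f x < f y \<or> f x = f y \<and> x \<le> y) (insort_key f x ys)"
    if "sorted_wrt (\<lambda>x y. f x < f y \<or> f x = f y \<and> x \<le> y) ys" "\<forall>y\<in>set ys. x \<le> y" for ys
    using that by (induction ys) (auto simp: set_insort_key)
  with Cons show ?case by simp
qed

theorem lemma6:
  fixes n0 l N :: nat and E0 :: "nat set set" and req :: "nat \<Rightarrow> nat"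
  assumes "seed_graph n0 E0"
    and "1 \<le> l" and "l \<le> n0"
    and "None \<notin> set_pmf (process n0 E0 l N req (time_order l N) (\<lambda>_. None))"
  shows "process n0 E0 l N req (degree_time_order l N req) (\<lambda>_. None)
         = process n0 E0 l N req (time_order l N) (\<lambda>_. None)"
proof (rule process_eq_if_respects_dependencies)
  have "sorted_wrt (<) (time_order l N)"
    unfolding time_order_def by (rule sorted_list_of_set.strict_sorted_key_list_of_set)
  then show "sorted_wrt (\<lambda>t s. \<not> depends_on req t s) (time_order l N)"
    by (rule sorted_wrt_mono_rel[rotated]) (auto simp: depends_on_def)
  have "sorted (time_order l N)" by (simp add: time_order_def)
  then show "sorted_wrt (\<lambda>t s. \<not> depends_on req t s) (degree_time_order l N req)"
    unfolding degree_time_order_def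
    by (rule sorted_wrt_mono_rel[rotated, OF sorted_wrt_sort_key_lex]) (auto simp: depends_on_def)
  show "mset (degree_time_order l N req) = mset (time_order l N)"
    by (simp add: degree_time_order_def)
qed

end
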